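(* Let $T$ be a lush hedge of height $H\ge2$ and let $\Lambda=(\alpha_1,\alpha_2,\beta_2,\beta_3,\beta_4)\in\mathcal B$. Then every matrix $A\in\mathcal{PH}(C^{\Lambda}_{H+1},T)$ has a critical multiplicity list; in fact $\alpha_1,\alpha_2,\beta_2,\beta_3,\beta_4$ witness this.
   Context: Hedges: a rooted tree has a distinguished root; $y$ is a child of adjacent $z$ if the root-to-$y$ path passes through $z$; a leaf is a non-root vertex of degree 1 (in $P_1$ the single vertex is root and leaf). A hedge is a rooted tree that is $P_1$ or in which all leaves are at equal distance from the root. $\mathrm h(u)$ is the distance from $u$ to a nearest leaf; the height of the hedge is that of its root; $V_i(T)$ is the set of vertices of height $i$; $\ell_i(T)=|V_{i-1}(T)|-|V_i(T)|$ for $i\ge1$. A hedge is lush if every vertex of height $\ge2$ has at least three children and every vertex of height $1$ at least two. $P_n$ is the path $1-\cdots-n$ rooted at $1$. $\mathcal R(T)$: real matrices indexed by $V(T)$ with $a_{ij}\neq0$ iff $\{i,j\}\in E(T)$ ($i\ne j$), $a_{ij}a_{ji}>0$ on edges, arbitrary diagonal. Path-to-hedge: for $C=(c_{ij})\in\mathcal R(P_{H+1})$ and $v\in V(T)$ put $v'=H+1-\mathrm h(v)$; $\mathcal{PH}(C,T)$ is the set of $A\in\mathcal R(T)$ with $a_{vv}=c_{v'v'}$ for all $v$ and $\sum_{u\text{ child of }v}a_{vu}a_{uv}=c_{v',v'+1}c_{v'+1,v'}$ for every non-leaf $v$. $\mathcal B$ is the set of $(\alpha_1,\alpha_2,\beta_2,\beta_3,\beta_4)\in\mathbb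 R^5$ with distinct entries satisfying one of: $\beta_2<\alpha_1<\alpha_2<\beta_3<\beta_4$; $\beta_2<\beta_4<\alpha_1<\alpha_2<\beta_3$; $\beta_4<\beta_2<\alpha_1<\alpha_2<\beta_3$ and $\alpha_2+\beta_2>\beta_4+\beta_3$; $\beta_3<\beta_2<\alpha_1<\alpha_2<\beta_4$ and $\alpha_2+\beta_2<\beta_4+\beta_3$; $\beta_3<\beta_2<\beta_4<\alpha_1<\alpha_2$; $\beta_4<\beta_3<\beta_2<\alpha_1<\alpha_2$; $\beta_4<\beta_3<\alpha_2<\alpha_1<\beta_2$; $\beta_3<\alpha_2<\alpha_1<\beta_4<\beta_2$; $\beta_3<\alpha_2<\alpha_1<\beta_2<\beta_4$ and $\alpha_2+\beta_2<\beta_4+\beta_3$; $\beta_4<\alpha_2<\alpha_1<\beta_2<\beta_3$ and $\alpha_2+\beta_2>\beta_4+\beta_3$; $\alpha_2<\alpha_1<\beta_4<\beta_2<\beta_3$; $\alpha_2<\alpha_1<\beta_2<\beta_3<\beta_4$. For $\Lambda\in\mathcal B$, $C^{\Lambda}_n$ is the $n\times n$ tridiagonal matrix with diagonal $(a_n,\dots,a_1)$, superdiagonal $(b_n,\dots,b_2)$, subdiagonal all $1$, where $a_i=\alpha_1$ ($i$ odd), $a_2=-\alpha_1+\alpha_2+\beta_2$, $a_i=\alpha_2$ ($i>2$ even), $b_2=(\beta_2-\alpha_1)(\alpha_1-\alpha_2)$, $b_3=(\beta_3-\alpha_2)(\beta_3-\beta_2)$, $b_4=\frac{(\beta_4-\alpha_1)(\beta_3-\beta_4)(\alpha_2+\beta_2-\beta_3-\beta_4)}{\beta_4-\beta_2}$,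 $b_i=(\beta_j-\alpha_1)(\beta_j-\alpha_2)$ for $i>4$, $j\in\{2,3,4\}$, $i\equiv j\pmod3$. Critical multiplicity list: for a lush hedge $T$ of height $H\ge2$, a matrix $A\in\mathcal R(T)$ has a critical multiplicity list if there exist five distinct reals $\alpha_1,\alpha_2,\beta_2,\beta_3,\beta_4$ (witnesses) with $\mathrm{mult}(\alpha_j,A)\ge\sum_{i\ge j,\ i\equiv j\ (2)}\ell_i(T)$ for $j=1,2$, $\mathrm{mult}(\beta_j,A)\ge\sum_{i\ge j,\ i\equiv j\ (3)}\ell_i(T)$ for $j=2,3,4$, and $\mathrm{mult}(\beta_4,A)<\ell_3(T)$ (multiplicity $0$ allowed, i.e. $\beta_4$ need not be an eigenvalue). *)

theory Defs
  imports "Jordan_Normal_Form.Char_Poly"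
begin

definition is_tree :: "nat \<Rightarrow> (nat \<Rightarrow> nat \<Rightarrow> bool) \<Rightarrow> bool" where
  "is_tree n E \<longleftrightarrow> n \<ge> 1
     \<and> (\<forall>u v. E u v \<longrightarrow> u < n \<and> v < n)
     \<and> (\<forall>u v. E u v \<longrightarrow> E v u)
     \<and> (\<forall>u. \<not> E u u)
     \<and> (\<forall>u<n. \<forall>v<n. (E\<^sup>*\<^sup>*) u v)
     \<and> card {(u, v). u < v \<and> v < n \<and> E u v} = n - 1"

definition is_rooted_tree :: "nat \<Rightarrow> (nat \<Rightarrow> nat \<Rightarrow> bool) \<Rightarrow> nat \<Rightarrow> bool" where
  "is_rooted_tree n E r \<longleftrightarrow> is_tree n E \<and> r < n"

definition tdist :: "(nat \<Rightarrow> nat \<Rightarrow> bool) \<Rightarrow> nat \<Rightarrow> nat \<Rightarrow> nat" where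
  "tdist E u v = (LEAST k. (E ^^ k) u v)"

definition is_child :: "(nat \<Rightarrow> nat \<Rightarrow> bool) \<Rightarrow> nat \<Rightarrow> nat \<Rightarrow> nat \<Rightarrow> bool" where
  "is_child E r y z \<longleftrightarrow> E z y \<and> tdist E r y = tdist E r z + 1"

definition children :: "nat \<Rightarrow> (nat \<Rightarrow> nat \<Rightarrow> bool) \<Rightarrow> nat \<Rightarrow> nat \<Rightarrow> nat set" where
  "children n E r z = {y. y < n \<and> is_child E r y z}"

definition degree :: "nat \<Rightarrow> (nat \<Rightarrow> nat \<Rightarrow> bool) \<Rightarrow> nat \<Rightarrow> nat" where
  "degree n E v = card {u. u < n \<and> E v u}"

definition is_leaf :: "nat \<Rightarrow> (nat \<Rightarrow> nat \<Rightarrow> bool) \<Rightarrow> nat \<Rightarrow> nat \<Rightarrow> bool" where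
  "is_leaf n E r v \<longleftrightarrow> v < n \<and> ((v \<noteq> r \<and> degree n E v = 1) \<or> n = 1)"

definition height :: "nat \<Rightarrow> (nat \<Rightarrow> nat \<Rightarrow> bool) \<Rightarrow> nat \<Rightarrow> nat \<Rightarrow> nat" where
  "height n E r u = Min {tdist E u l | l. is_leaf n E r l}"

definition is_hedge :: "nat \<Rightarrow> (nat \<Rightarrow> nat \<Rightarrow> bool) \<Rightarrow> nat \<Rightarrow> bool" where
  "is_hedge n E r \<longleftrightarrow> is_rooted_tree n E r \<and>
     (n = 1 \<or> (\<forall>l1 l2. is_leaf n E r l1 \<and> is_leaf n E r l2 \<longrightarrow> tdist E r l1 = tdist E r l2))"

definition hedge_height :: "nat \<Rightarrow> (nat \<Rightarrow> nat \<Rightarrow> bool) \<Rightarrow> nat \<Rightarrow> nat" where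
  "hedge_height n E r = height n E r r"

definition Vset :: "nat \<Rightarrow> (nat \<Rightarrow> nat \<Rightarrow> bool) \<Rightarrow> nat \<Rightarrow> nat \<Rightarrow> nat set" where
  "Vset n E r i = {v. v < n \<and> height n E r v = i}"

definition ell :: "nat \<Rightarrow> (nat \<Rightarrow> nat \<Rightarrow> bool) \<Rightarrow> nat \<Rightarrow> nat \<Rightarrow> int" where
  "ell n E r i = int (card (Vset n E r (i - 1))) - int (card (Vset n E r i))"

definition is_lush :: "nat \<Rightarrow> (nat \<Rightarrow> nat \<Rightarrow> bool) \<Rightarrow> nat \<Rightarrow> bool" where
  "is_lush n E r \<longleftrightarrow> is_hedge n E r \<and>
     (\<forall>v<n. (height n E r v \<ge> 2 \<longrightarrow> card (children n E r v) \<ge> 3)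
          \<and> (height n E r v = 1 \<longrightarrow> card (children n E r v) \<ge> 2))"

definition matR :: "nat \<Rightarrow> (nat \<Rightarrow> nat \<Rightarrow> bool) \<Rightarrow> real mat set" where
  "matR n E = {A. A \<in> carrier_mat n n \<and>
     (\<forall>i<n. \<forall>j<n. i \<noteq> j \<longrightarrow> (A $$ (i, j) \<noteq> 0 \<longleftrightarrow> E i j)) \<and>
     (\<forall>i<n. \<forall>j<n. E i j \<longrightarrow> A $$ (i, j) * A $$ (j, i) > 0)}"

definition mult :: "real \<Rightarrow> real mat \<Rightarrow> nat" where
  "mult x A = order x (char_poly A)"

text \<open>Path-to-hedge set PH(C,T). C is given by its entries c i j with 1-based
indices 1..H+1 (the path P_{H+1}). Vertex v corresponds to v' = H+1-h(v).\<close>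
definition PH :: "(nat \<Rightarrow> nat \<Rightarrow> real) \<Rightarrow> nat \<Rightarrow> (nat \<Rightarrow> nat \<Rightarrow> bool) \<Rightarrow> nat \<Rightarrow> real mat set" where
  "PH c n E r = (let H = hedge_height n E r; pr = (\<lambda>v. H + 1 - height n E r v) in
     {A. A \<in> matR n E \<and>
       (\<forall>v<n. A $$ (v, v) = c (pr v) (pr v)) \<and>
       (\<forall>v<n. \<not> is_leaf n E r v \<longrightarrow>
          (\<Sum>u\<in>children n E r v. A $$ (v, u) * A $$ (u, v))
            = c (pr v) (pr v + 1) * c (pr v + 1) (pr v))})"

definition inB :: "real \<Rightarrow> real \<Rightarrow> real \<Rightarrow> real \<Rightarrow> real \<Rightarrow> bool" where
  "inB a1 a2 b2 b3 b4 \<longleftrightarrow> distinct [a1, a2, b2, b3, b4] \<and>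
    ((b2 < a1 \<and> a1 < a2 \<and> a2 < b3 \<and> b3 < b4)
   \<or> (b2 < b4 \<and> b4 < a1 \<and> a1 < a2 \<and> a2 < b3)
   \<or> (b4 < b2 \<and> b2 < a1 \<and> a1 < a2 \<and> a2 < b3 \<and> a2 + b2 > b4 + b3)
   \<or> (b3 < b2 \<and> b2 < a1 \<and> a1 < a2 \<and> a2 < b4 \<and> a2 + b2 < b4 + b3)
   \<or> (b3 < b2 \<and> b2 < b4 \<and> b4 < a1 \<and> a1 < a2)
   \<or> (b4 < b3 \<and> b3 < b2 \<and> b2 < a1 \<and> a1 < a2)
   \<or> (b4 < b3 \<and> b3 < a2 \<and> a2 < a1 \<and> a1 < b2)
   \<or> (b3 < a2 \<and> a2 < a1 \<and> a1 < b4 \<and> b4 < b2)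
   \<or> (b3 < a2 \<and> a2 < a1 \<and> a1 < b2 \<and> b2 < b4 \<and> a2 + b2 < b4 + b3)
   \<or> (b4 < a2 \<and> a2 < a1 \<and> a1 < b2 \<and> b2 < b3 \<and> a2 + b2 > b4 + b3)
   \<or> (a2 < a1 \<and> a1 < b4 \<and> b4 < b2 \<and> b2 < b3)
   \<or> (a2 < a1 \<and> a1 < b2 \<and> b2 < b3 \<and> b3 < b4))"

definition Ca :: "real \<Rightarrow> real \<Rightarrow> real \<Rightarrow> real \<Rightarrow> real \<Rightarrow> nat \<Rightarrow> real" where
  "Ca a1 a2 b2 b3 b4 i =
     (if odd i then a1 else if i = 2 then - a1 + a2 + b2 else a2)"

definition Cb :: "real \<Rightarrow> real \<Rightarrow> real \<Rightarrow> real \<Rightarrow> real \<Rightarrow> nat \<Rightarrow> real" where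
  "Cb a1 a2 b2 b3 b4 i =
     (if i = 2 then (b2 - a1) * (a1 - a2)
      else if i = 3 then (b3 - a2) * (b3 - b2)
      else if i = 4 then (b4 - a1) * (b3 - b4) * (a2 + b2 - b3 - b4) / (b4 - b2)
      else (let bj = (if i mod 3 = 2 then b2 else if i mod 3 = 0 then b3 else b4)
            in (bj - a1) * (bj - a2)))"

text \<open>Entries of the n x n tridiagonal matrix C^Lambda_n, 1-based indices k,l in 1..n:
diagonal (a_n,...,a_1), superdiagonal (b_n,...,b_2), subdiagonal all 1.\<close>
definition Cmat :: "real \<Rightarrow> real \<Rightarrow> real \<Rightarrow> real \<Rightarrow> real \<Rightarrow> nat \<Rightarrow> nat \<Rightarrow> nat \<Rightarrow> real" where
  "Cmat a1 a2 b2 b3 b4 n k l =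
     (if k < 1 \<or> l < 1 \<or> k > n \<or> l > n then 0
      else if k = l then Ca a1 a2 b2 b3 b4 (n + 1 - k)
      else if l = k + 1 then Cb a1 a2 b2 b3 b4 (n + 1 - k)
      else if k = l + 1 then 1
      else 0)"

definition witnesses_critical :: "nat \<Rightarrow> (nat \<Rightarrow> nat \<Rightarrow> bool) \<Rightarrow> nat \<Rightarrow> real mat
    \<Rightarrow> real \<Rightarrow> real \<Rightarrow> real \<Rightarrow> real \<Rightarrow> real \<Rightarrow> bool" where
  "witnesses_critical n E r A a1 a2 b2 b3 b4 \<longleftrightarrow>
     distinct [a1, a2, b2, b3, b4] \<and>
     int (mult a1 A) \<ge> (\<Sum>i\<in>{i. 1 \<le> i \<and> i \<le> n + 1 \<and> i mod 2 = 1 mod 2}. ell n E r i) \<and>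
     int (mult a2 A) \<ge> (\<Sum>i\<in>{i. 2 \<le> i \<and> i \<le> n + 1 \<and> i mod 2 = 2 mod 2}. ell n E r i) \<and>
     int (mult b2 A) \<ge> (\<Sum>i\<in>{i. 2 \<le> i \<and> i \<le> n + 1 \<and> i mod 3 = 2 mod 3}. ell n E r i) \<and>
     int (mult b3 A) \<ge> (\<Sum>i\<in>{i. 3 \<le> i \<and> i \<le> n + 1 \<and> i mod 3 = 3 mod 3}. ell n E r i) \<and>
     int (mult b4 A) \<ge> (\<Sum>i\<in>{i. 4 \<le> i \<and> i \<le> n + 1 \<and> i mod 3 = 4 mod 3}. ell n E r i) \<and>
     int (mult b4 A) < ell n E r 3"

definition has_critical_mult_list :: "nat \<Rightarrow> (nat \<Rightarrow> nat \<Rightarrow> bool) \<Rightarrow> nat \<Rightarrow> real mat \<Rightarrow> bool" where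
  "has_critical_mult_list n E r A \<longleftrightarrow>
     (\<exists>a1 a2 b2 b3 b4. witnesses_critical n E r A a1 a2 b2 b3 b4)"

end

theory Submission
  imports Defs
begin

text \<open>Let \<open>q\<^sub>0 = 1, q\<^sub>1, \<dots>, q\<^sub>H\<^sub>+\<^sub>1\<close> be the characteristic polynomials of the trailing
  principal submatrices of \<open>C = C\<^sup>\<Lambda>\<^sub>H\<^sub>+\<^sub>1\<close>, so that
  \<open>q\<^sub>i = (x - a\<^sub>i) q\<^sub>i\<^sub>-\<^sub>1 - b\<^sub>i q\<^sub>i\<^sub>-\<^sub>2\<close>. For \<open>A \<in> PH(C, T)\<close>, Gaussian elimination of
  \<open>xI - A\<close> from the leaves of the hedge upwards has pivot \<open>q\<^sub>h\<^sub>+\<^sub>1(x) / q\<^sub>h(x)\<close> at every vertex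
  of height \<open>h\<close>, because the products \<open>a\<^sub>v\<^sub>u a\<^sub>u\<^sub>v\<close> over the children \<open>u\<close> of \<open>v\<close> sum to
  \<open>b\<^sub>h\<^sub>+\<^sub>1\<close>. Hence \<open>\<chi>\<^sub>A \<Prod>\<^sub>v q\<^sub>h\<^sub>(\<^sub>v\<^sub>) = \<Prod>\<^sub>v q\<^sub>h\<^sub>(\<^sub>v\<^sub>)\<^sub>+\<^sub>1\<close>, and counting vertices by height,
  \<open>mult(x, A) = \<Sum>\<^sub>i \<ell>\<^sub>i(T) \<cdot> ord\<^sub>x q\<^sub>i\<close>.

  The same sums show \<open>b\<^sub>i > 0\<close>, so a Wronskian argument makes every root of every
  \<open>q\<^sub>i\<close> simple. For the entries of \<open>C\<^sup>\<Lambda>\<close> one checks that \<open>\<alpha>\<^sub>1\<close> is a root of the odd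
  \<open>q\<^sub>i\<close>, \<open>\<alpha>\<^sub>2\<close> of the even ones and \<open>\<beta>\<^sub>j\<close> of \<open>q\<^sub>j, q\<^sub>j\<^sub>+\<^sub>3, \<dots>\<close>, which gives the lower
  bounds. Finally \<open>\<beta>\<^sub>4\<close> is not a root of \<open>q\<^sub>1, q\<^sub>2, q\<^sub>3\<close>, so
  \<open>mult(\<beta>\<^sub>4, A) \<le> \<Sum>\<^sub>i\<^sub>\<ge>\<^sub>4 \<ell>\<^sub>i = |V\<^sub>3|\<close>, while lushness gives \<open>\<ell>\<^sub>3 = |V\<^sub>2| - |V\<^sub>3| \<ge> 2|V\<^sub>3| + 1\<close>.\<close>

section \<open>Polynomials of a three-term recurrence\<close>

text \<open>\<open>three_term_poly a b i\<close> is the characteristic polynomial of the trailing \<open>i \<times> i\<close>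
  principal submatrix of a tridiagonal matrix with diagonal \<open>(\<dots>, a 2, a 1)\<close> and
  products \<open>b i\<close> of opposite off-diagonal entries.\<close>
fun three_term_poly :: "(nat \<Rightarrow> real) \<Rightarrow> (nat \<Rightarrow> real) \<Rightarrow> nat \<Rightarrow> real poly" where
  "three_term_poly a b 0 = 1"
| "three_term_poly a b (Suc 0) = [:- a 1, 1:]"
| "three_term_poly a b (Suc (Suc i)) =
     [:- a (i + 2), 1:] * three_term_poly a b (Suc i) - Polynomial.smult (b (i + 2)) (three_term_poly a b i)"

lemma poly_three_term_poly_rec:
  assumes "i \<ge> 2"
  shows "poly (three_term_poly a b i) x
           = (x - a i) * poly (three_term_poly a b (i - 1)) x - b i * poly (three_term_poly a b (i - 2)) x"
proof -
  obtain j where "i = Suc (Suc j)" using assms by (metis add_2_eq_Suc le_Suc_ex)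
  then show ?thesis by (simp add: algebra_simps)
qed

definition three_term_wronskian :: "(nat \<Rightarrow> real) \<Rightarrow> (nat \<Rightarrow> real) \<Rightarrow> nat \<Rightarrow> real \<Rightarrow> real" where
  "three_term_wronskian a b i x =
     poly (pderiv (three_term_poly a b i)) x * poly (three_term_poly a b (i - 1)) x
     - poly (three_term_poly a b i) x * poly (pderiv (three_term_poly a b (i - 1))) x"

text \<open>Christoffel--Darboux: the Wronskian of consecutive polynomials satisfies
  \<open>W\<^sub>i\<^sub>+\<^sub>1 = q\<^sub>i\<^sup>2 + b\<^sub>i\<^sub>+\<^sub>1 W\<^sub>i\<close>, so it stays positive while the \<open>b\<^sub>k\<close> are.\<close>
lemma three_term_wronskian_pos:
  assumes "i \<ge> 1" and "\<And>k. 2 \<le> k \<Longrightarrow> k \<le> i \<Longrightarrow> b k > 0"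
  shows "three_term_wronskian a b i x > 0"
  using assms
proof (induction i rule: nat_induct_at_least)
  case base
  then show ?case by (simp add: three_term_wronskian_def pderiv_pCons)
next
  case (Suc m)
  have "three_term_wronskian a b (Suc m) x
          = (poly (three_term_poly a b m) x)\<^sup>2 + b (m + 1) * three_term_wronskian a b m x"
  proof (cases m)
    case (Suc k)
    then show ?thesis unfolding three_term_wronskian_def
      by (simp add: pderiv_mult pderiv_diff pderiv_smult pderiv_pCons pderiv_add algebra_simps power2_eq_square)
  qed (use Suc in auto)
  moreover have "b (m + 1) > 0" "three_term_wronskian a b m x > 0" using Suc by auto
  ultimately show ?case by (smt (verit) mult_pos_pos zero_le_power2)
qed

lemma three_term_poly_nonzero:
  assumes "\<And>k. 2 \<le> k \<Longrightarrow> k \<le> i \<Longrightarrow> b k > 0"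
  shows "three_term_poly a b i \<noteq> 0"
proof
  assume zero: "three_term_poly a b i = 0"
  then have "i \<noteq> 0" by (metis one_neq_zero three_term_poly.simps(1))
  then have "three_term_wronskian a b i 0 > 0"
    using three_term_wronskian_pos[OF _ assms] by simp
  with zero show False by (simp add: three_term_wronskian_def)
qed

text \<open>A double root would make the Wronskian vanish.\<close>
lemma order_three_term_poly_le_1:
  assumes "i \<ge> 1" and "\<And>k. 2 \<le> k \<Longrightarrow> k \<le> i \<Longrightarrow> b k > 0"
  shows "order x (three_term_poly a b i) \<le> 1"
proof (rule ccontr)
  let ?q = "three_term_poly a b i"
  assume "\<not> ?thesis"
  then have ord: "order x ?q \<ge> 2" by simp
  have root: "poly ?q x = 0" using ord order_root by fastforce
  have "poly (pderiv ?q) x = 0"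
  proof (cases "pderiv ?q = 0")
    case False
    have "order x (pderiv ?q) \<ge> 1"
      using order_pderiv[OF three_term_poly_nonzero[OF assms(2)] root] ord by simp
    then show ?thesis using order_root by fastforce
  qed simp
  then have "three_term_wronskian a b i x = 0" using root by (simp add: three_term_wronskian_def)
  moreover have "three_term_wronskian a b i x > 0"
    by (rule three_term_wronskian_pos) (use assms in auto)
  ultimately show False by simp
qed

text \<open>Otherwise the simplifier unfolds \<open>three_term_poly\<close> at indices such as \<open>2 + 3 * k\<close>.\<close>
declare three_term_poly.simps(3) [simp del]

section \<open>The recurrence of \<open>C\<^sup>\<Lambda>\<close>\<close>

locale Lambda_params =
  fixes a1 a2 b2 b3 b4 :: real
begin

abbreviation q :: "nat \<Rightarrow> real poly" where
  "q \<equiv> three_term_poly (Ca a1 a2 b2 b3 b4) (Cb a1 a2 b2 b3 b4)"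

lemma poly_q_1: "poly (q 1) x = x - a1"
  by (simp add: Ca_def)

lemma poly_q_2: "poly (q 2) x = (x - a2) * (x - b2)"
  by (simp add: Ca_def Cb_def numeral_2_eq_2 three_term_poly.simps algebra_simps)

lemma poly_q_3: "poly (q 3) x = (x - a1) * ((x - a2) * (x - b2) - (b3 - a2) * (b3 - b2))"
  using poly_three_term_poly_rec[of 3 "Ca a1 a2 b2 b3 b4" "Cb a1 a2 b2 b3 b4" x]
  by (simp add: poly_q_1 poly_q_2 Ca_def Cb_def algebra_simps)

lemma Ca_ge_3: "i \<ge> 3 \<Longrightarrow> Ca a1 a2 b2 b3 b4 i = (if odd i then a1 else a2)"
  by (simp add: Ca_def)

lemma Cb_ge_5:
  "i \<ge> 5 \<Longrightarrow> Cb a1 a2 b2 b3 b4 i = (if i mod 3 = 2 then (b2 - a1) * (b2 - a2)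
     else if i mod 3 = 0 then (b3 - a1) * (b3 - a2) else (b4 - a1) * (b4 - a2))"
  by (simp add: Cb_def Let_def)

lemma q_root_step_2:
  assumes "Ca a1 a2 b2 b3 b4 (i + 2) = y" and "poly (q i) y = 0"
  shows "poly (q (i + 2)) y = 0"
  using poly_three_term_poly_rec[of "i + 2"] assms by simp

text \<open>Over three steps the diagonal contributes \<open>(y - \<alpha>\<^sub>1)(y - \<alpha>\<^sub>2)\<close>, which
  the superdiagonal entry cancels.\<close>
lemma q_root_step_3:
  assumes "i \<ge> 2" and "poly (q i) y = 0"
    and "Cb a1 a2 b2 b3 b4 (i + 3) = (y - a1) * (y - a2)"
  shows "poly (q (i + 3)) y = 0"
proof -
  let ?a = "Ca a1 a2 b2 b3 b4" and ?b = "Cb a1 a2 b2 b3 b4"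
  have diag: "(y - ?a (i + 3)) * (y - ?a (i + 2)) = (y - a1) * (y - a2)"
    using Ca_ge_3[of "i + 3"] Ca_ge_3[of "i + 2"] assms(1) by auto
  have "poly (q (i + 3)) y = (y - ?a (i + 3)) * poly (q (i + 2)) y - ?b (i + 3) * poly (q (i + 1)) y"
    using poly_three_term_poly_rec[of "i + 3" ?a ?b y] by simp
  moreover have "poly (q (i + 2)) y = (y - ?a (i + 2)) * poly (q (i + 1)) y"
    using poly_three_term_poly_rec[of "i + 2" ?a ?b y] assms(2) by simp
  ultimately have "poly (q (i + 3)) y
      = ((y - ?a (i + 3)) * (y - ?a (i + 2)) - (y - a1) * (y - a2)) * poly (q (i + 1)) y"
    unfolding assms(3) by (simp only: left_diff_distrib mult.assoc)
  then show ?thesis unfolding diag by simp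
qed

lemma q_alpha_roots: "poly (q (1 + 2 * k)) a1 = 0 \<and> poly (q (2 + 2 * k)) a2 = 0"
proof (induction k)
  case 0
  then show ?case using poly_q_1[of a1] poly_q_2[of a2] by simp
next
  case (Suc k)
  have "poly (q (1 + 2 * k + 2)) a1 = 0" "poly (q (2 + 2 * k + 2)) a2 = 0"
    by (rule q_root_step_2; use Suc Ca_ge_3 in simp)+
  moreover have "1 + 2 * Suc k = 1 + 2 * k + 2" "2 + 2 * Suc k = 2 + 2 * k + 2" by simp_all
  ultimately show ?case by metis
qed

lemma q_beta_roots:
  assumes "b4 \<noteq> b2"
  shows "poly (q (2 + 3 * k)) b2 = 0 \<and> poly (q (3 + 3 * k)) b3 = 0 \<and> poly (q (4 + 3 * k)) b4 = 0"
proof (induction k)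
  case 0
  let ?b = "Cb a1 a2 b2 b3 b4"
  have "?b 4 * (b4 - b2) = (b4 - a1) * (b3 - b4) * (a2 + b2 - b3 - b4)"
    using assms by (simp add: Cb_def)
  moreover have "(b4 - a1) * ((b4 - a2) * (b4 - b2) - (b3 - a2) * (b3 - b2))
      = (b4 - a1) * (b3 - b4) * (a2 + b2 - b3 - b4)"
    by (simp add: algebra_simps)
  moreover have "poly (q 4) b4 = (b4 - a2) * poly (q 3) b4 - ?b 4 * poly (q 2) b4"
    using poly_three_term_poly_rec[of 4 "Ca a1 a2 b2 b3 b4" ?b b4] by (simp add: Ca_def)
  moreover have "\<dots> = (b4 - a2) * ((b4 - a1) * ((b4 - a2) * (b4 - b2) - (b3 - a2) * (b3 - b2))
      - ?b 4 * (b4 - b2))"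
    unfolding poly_q_2 poly_q_3 by (simp add: algebra_simps)
  ultimately have "poly (q 4) b4 = 0" by simp
  then show ?case using poly_q_2[of b2] poly_q_3[of b3] by simp
next
  case (Suc k)
  have "(5 + 3 * k) mod 3 = 2" "(6 + 3 * k) mod 3 = 0" "(7 + 3 * k) mod 3 = 1" by presburger+
  then have cb: "Cb a1 a2 b2 b3 b4 (2 + 3 * k + 3) = (b2 - a1) * (b2 - a2)"
    "Cb a1 a2 b2 b3 b4 (3 + 3 * k + 3) = (b3 - a1) * (b3 - a2)"
    "Cb a1 a2 b2 b3 b4 (4 + 3 * k + 3) = (b4 - a1) * (b4 - a2)"
    using Cb_ge_5 by (simp_all add: add.commute)
  have "poly (q (2 + 3 * k + 3)) b2 = 0" "poly (q (3 + 3 * k + 3)) b3 = 0"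
    "poly (q (4 + 3 * k + 3)) b4 = 0"
    by (rule q_root_step_3; use Suc cb in simp)+
  moreover have "2 + 3 * Suc k = 2 + 3 * k + 3" "3 + 3 * Suc k = 3 + 3 * k + 3"
    "4 + 3 * Suc k = 4 + 3 * k + 3" by simp_all
  ultimately show ?case by metis
qed

text \<open>This is where \<open>\<alpha>\<^sub>2 + \<beta>\<^sub>2 \<noteq> \<beta>\<^sub>3 + \<beta>\<^sub>4\<close> is needed:
  \<open>q\<^sub>3(\<beta>\<^sub>4) = (\<beta>\<^sub>4 - \<alpha>\<^sub>1)(\<beta>\<^sub>4 - \<beta>\<^sub>3)(\<beta>\<^sub>3 + \<beta>\<^sub>4 - \<alpha>\<^sub>2 - \<beta>\<^sub>2)\<close>.\<close>
lemma q_b4_nonroot: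
  assumes "distinct [a1, a2, b2, b3, b4]" and "a2 + b2 \<noteq> b3 + b4" and "1 \<le> i" "i \<le> 3"
  shows "poly (q i) b4 \<noteq> 0"
proof -
  have "poly (q 3) b4 = (b4 - a1) * (b4 - b3) * (b3 + b4 - a2 - b2)"
    by (simp add: poly_q_3 algebra_simps)
  moreover have "i = 1 \<or> i = 2 \<or> i = 3" using assms(3,4) by auto
  ultimately show ?thesis using assms(1,2) poly_q_1[of b4] poly_q_2[of b4] by auto
qed

end

section \<open>Rooted trees\<close>

locale rooted_tree =
  fixes n :: nat and E :: "nat \<Rightarrow> nat \<Rightarrow> bool" and r :: nat
  assumes rooted_tree: "is_rooted_tree n E r"
begin

lemma tree: "is_tree n E" and root_lt: "r < n"
  using rooted_tree by (auto simp: is_rooted_tree_def)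

lemma edge_lt: "E u v \<Longrightarrow> u < n \<and> v < n"
  and edge_sym: "E u v \<Longrightarrow> E v u"
  and edge_irrefl: "\<not> E u u"
  and card_edges: "card {(u, v). u < v \<and> v < n \<and> E u v} = n - 1"
  using tree by (simp_all add: is_tree_def)

lemma walk_tdist:
  assumes "u < n" "v < n"
  shows "(E ^^ tdist E u v) u v"
proof -
  have "(E\<^sup>*\<^sup>*) u v" using tree assms unfolding is_tree_def by blast
  then have "\<exists>k. (E ^^ k) u v" by (rule rtranclp_imp_relpowp)
  then obtain k where "(E ^^ k) u v" by blast
  then show ?thesis unfolding tdist_def by (rule LeastI)
qed

lemma tdist_le: "(E ^^ k) u v \<Longrightarrow> tdist E u v \<le> k"
  unfolding tdist_def by (rule Least_le)

lemma tdist_triangle: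
  assumes "u < n" "v < n" "w < n"
  shows "tdist E u w \<le> tdist E u v + tdist E v w"
proof (rule tdist_le)
  show "(E ^^ (tdist E u v + tdist E v w)) u w"
    unfolding relpowp_add using walk_tdist[OF assms(1,2)] walk_tdist[OF assms(2,3)] by auto
qed

abbreviation depth :: "nat \<Rightarrow> nat" where
  "depth v \<equiv> tdist E r v"

lemma depth_root: "depth r = 0"
  using tdist_le[of 0 r r] by simp

lemma depth_eq_0: "v < n \<Longrightarrow> depth v = 0 \<Longrightarrow> v = r"
  using walk_tdist[OF root_lt, of v] by simp

lemma depth_edge_le: "E u v \<Longrightarrow> depth v \<le> depth u + 1"
  using tdist_triangle[OF root_lt, of u v] tdist_le[of 1 u v] edge_lt by fastforce

lemma parent_exists:
  assumes "v < n" "v \<noteq> r"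
  shows "\<exists>u. u < n \<and> E u v \<and> depth u + 1 = depth v"
proof -
  obtain d where d: "depth v = Suc d" using depth_eq_0 assms by (cases "depth v") auto
  with walk_tdist[OF root_lt assms(1)] obtain u where u: "(E ^^ d) r u" "E u v"
    by (auto elim: relpowp_Suc_E)
  then show ?thesis using tdist_le[OF u(1)] depth_edge_le[OF u(2)] d edge_lt[OF u(2)] by force
qed

definition parent :: "nat \<Rightarrow> nat" where
  "parent v = (SOME u. u < n \<and> E u v \<and> depth u + 1 = depth v)"

lemma parent:
  assumes "v < n" "v \<noteq> r"
  shows "parent v < n" "E (parent v) v" "depth (parent v) + 1 = depth v"
  using someI_ex[OF parent_exists[OF assms]] unfolding parent_def by auto

text \<open>Counting edges: \<open>v \<mapsto> {v, parent v}\<close> injects the \<open>n - 1\<close> non-root vertices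
  into the \<open>n - 1\<close> edges, hence every edge joins a vertex to its parent.\<close>
definition parent_edge :: "nat \<Rightarrow> nat \<times> nat" where
  "parent_edge v = (min v (parent v), max v (parent v))"

lemma parent_edge_eq_iff: "parent_edge v = (min u w, max u w) \<longleftrightarrow> {v, parent v} = {u, w}"
  unfolding parent_edge_def by (auto simp: doubleton_eq_iff min_def max_def)

lemma inj_on_parent_edge: "inj_on parent_edge ({..<n} - {r})"
proof (rule inj_onI)
  fix v w assume v: "v \<in> {..<n} - {r}" and w: "w \<in> {..<n} - {r}" and eq: "parent_edge v = parent_edge w"
  then have "{v, parent v} = {w, parent w}"
    using parent_edge_eq_iff[of v w "parent w"] by (simp add: parent_edge_def)
  then have "v = w \<or> (v = parent w \<and> w = parent v)" by (auto simp: doubleton_eq_iff)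
  then show "v = w" using parent(3)[of v] parent(3)[of w] v w by auto
qed

lemma parent_edge_image: "parent_edge ` ({..<n} - {r}) = {(u, v). u < v \<and> v < n \<and> E u v}"
proof (rule card_subset_eq)
  show "finite {(u, v). u < v \<and> v < n \<and> E u v}"
    by (rule finite_subset[of _ "{..<n} \<times> {..<n}"]) auto
  show "parent_edge ` ({..<n} - {r}) \<subseteq> {(u, v). u < v \<and> v < n \<and> E u v}"
  proof
    fix x assume "x \<in> parent_edge ` ({..<n} - {r})"
    then obtain v where v: "v < n" "v \<noteq> r" "x = parent_edge v" by auto
    moreover have "parent v \<noteq> v" using parent(2)[OF v(1,2)] edge_irrefl by metis
    ultimately show "x \<in> {(u, v). u < v \<and> v < n \<and> E u v}"
      using parent[OF v(1,2)] edge_sym by (auto simp: parent_edge_def min_def max_def)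
  qed
  show "card (parent_edge ` ({..<n} - {r})) = card {(u, v). u < v \<and> v < n \<and> E u v}"
    using card_image[OF inj_on_parent_edge] card_edges root_lt by simp
qed

lemma edge_parent_cases:
  assumes e: "E u v"
  shows "(v \<noteq> r \<and> u = parent v) \<or> (u \<noteq> r \<and> v = parent u)"
proof -
  have "u \<noteq> v" using e edge_irrefl by metis
  then have "(min u v, max u v) \<in> {(u, v). u < v \<and> v < n \<and> E u v}"
    using e edge_sym edge_lt[OF e] by (auto simp: min_def max_def)
  then obtain w where w: "w \<in> {..<n} - {r}" "parent_edge w = (min u v, max u v)"
    unfolding parent_edge_image[symmetric] by (rule imageE) simp
  then have "{w, parent w} = {u, v}" using parent_edge_eq_iff by blast
  then show ?thesis using w(1) by (auto simp: doubleton_eq_iff)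
qed

lemma children_iff: "y \<in> children n E r z \<longleftrightarrow> y < n \<and> y \<noteq> r \<and> parent y = z"
proof
  assume "y \<in> children n E r z"
  then have y: "y < n" and e: "E z y" and d: "depth y = depth z + 1"
    by (auto simp: children_def is_child_def)
  have "y \<noteq> r" using d depth_root by auto
  moreover have "parent y = z"
    using edge_parent_cases[OF e] parent(3)[of z] d edge_lt[OF e] by auto
  ultimately show "y < n \<and> y \<noteq> r \<and> parent y = z" using y by simp
next
  assume "y < n \<and> y \<noteq> r \<and> parent y = z"
  then show "y \<in> children n E r z" using parent[of y] by (auto simp: children_def is_child_def)
qed

abbreviation child_rel :: "nat \<Rightarrow> nat \<Rightarrow> bool" where
  "child_rel v w \<equiv> w \<in> children n E r v"

lemma finite_children: "finite (children n E r v)"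
  by (simp add: children_def)

lemma depth_child: "y \<in> children n E r v \<Longrightarrow> depth y = depth v + 1"
  using children_iff parent(3) by force

lemma edge_child_cases: "E u v \<Longrightarrow> v \<in> children n E r u \<or> u \<in> children n E r v"
  using edge_parent_cases edge_lt children_iff by blast

lemma descent:
  assumes "(child_rel ^^ k) v w"
  shows "depth w = depth v + k \<and> (E ^^ k) v w"
  using assms
proof (induction k arbitrary: w)
  case (Suc k)
  then obtain y where y: "(child_rel ^^ k) v y" "w \<in> children n E r y"
    by (auto elim: relpowp_Suc_E)
  have "w < n" "w \<noteq> r" "parent w = y" using y(2) children_iff by auto
  then have "E y w" using parent(2) by blast
  then show ?case using Suc.IH[OF y(1)] depth_child[OF y(2)] by (auto intro: relpowp_Suc_I)
qed simp

lemma child_ne: "w \<in> children n E r v \<Longrightarrow> w \<noteq> v"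
  using depth_child by fastforce

lemma child_lt: "w \<in> children n E r v \<Longrightarrow> w < n"
  by (simp add: children_iff)

end

section \<open>Lush hedges\<close>

locale lush_hedge = rooted_tree +
  assumes lush: "is_lush n E r" and hedge_height_ge_2: "hedge_height n E r \<ge> 2"
begin

lemma hedge: "is_hedge n E r"
  using lush by (simp add: is_lush_def)

lemma two_le_n: "n \<ge> 2"
proof (rule ccontr)
  assume "\<not> n \<ge> 2"
  then have n: "n = 1" and r: "r = 0" using root_lt by auto
  have "is_leaf n E r l \<longleftrightarrow> l = 0" for l using n by (auto simp: is_leaf_def)
  then have "{tdist E r l |l. is_leaf n E r l} = {0}" using r depth_root by auto
  then have "hedge_height n E r = 0" unfolding hedge_height_def height_def by simp
  then show False using hedge_height_ge_2 by simp
qed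

lemma children_root_nonempty: "children n E r r \<noteq> {}"
proof -
  define v :: nat where "v = (if r = 0 then 1 else 0)"
  have v: "v < n" "v \<noteq> r" using two_le_n by (auto simp: v_def)
  obtain d where "depth v = Suc d" using depth_eq_0 v by (cases "depth v") auto
  with walk_tdist[OF root_lt v(1)] obtain y where "E r y" using relpowp_Suc_D2 by metis
  then have "y \<in> children n E r r" using edge_child_cases[of r y] by (auto simp: children_iff)
  then show ?thesis by blast
qed

lemma leaf_if_no_children:
  assumes v: "v < n" and no_children: "children n E r v = {}"
  shows "is_leaf n E r v"
proof -
  have vr: "v \<noteq> r" using children_root_nonempty no_children by auto
  have "u = parent v" if "E v u" for u
    using edge_parent_cases[OF that] edge_lt[OF that] no_children by (auto simp: children_iff)
  then have "{u. u < n \<and> E v u} = {parent v}" using parent[OF v vr] edge_sym by auto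
  then show ?thesis using v vr by (simp add: is_leaf_def degree_def)
qed

lemma leaf_below:
  assumes v: "v < n"
  shows "\<exists>k w. (child_rel ^^ k) v w \<and> is_leaf n E r w"
proof -
  define D where "D = {w. w < n \<and> (\<exists>k. (child_rel ^^ k) v w)}"
  have fin: "finite D" unfolding D_def by simp
  have "(child_rel ^^ 0) v v" by simp
  then have "v \<in> D" using v unfolding D_def by blast
  then have "Max (depth ` D) \<in> depth ` D" using fin by (intro Max_in) auto
  then obtain w where w: "w \<in> D" "depth w = Max (depth ` D)" by auto
  obtain k where k: "(child_rel ^^ k) v w" using w(1) unfolding D_def by blast
  have "children n E r w = {}"
  proof (rule ccontr)
    assume "children n E r w \<noteq> {}"
    then obtain y where y: "y \<in> children n E r w" by blast
    then have "y \<in> D" using k children_iff unfolding D_def by (blast intro: relpowp_Suc_I)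
    then have "depth y \<le> depth w" using fin w(2) by simp
    then show False using depth_child[OF y] by simp
  qed
  then show ?thesis using k leaf_if_no_children w(1) unfolding D_def by blast
qed

abbreviation H :: nat where
  "H \<equiv> hedge_height n E r"

lemma leaf_lt: "is_leaf n E r l \<Longrightarrow> l < n"
  by (simp add: is_leaf_def)

lemma depth_leaves_eq:
  assumes "is_leaf n E r l" "is_leaf n E r l'"
  shows "depth l = depth l'"
proof -
  have "\<forall>l l'. is_leaf n E r l \<and> is_leaf n E r l' \<longrightarrow> depth l = depth l'"
    using hedge two_le_n unfolding is_hedge_def by auto
  then show ?thesis using assms by blast
qed

lemma height_eq_leaf_depth:
  assumes v: "v < n" and l: "is_leaf n E r l"
  shows "height n E r v = depth l - depth v"
proof -
  obtain k w where kw: "(child_rel ^^ k) v w" "is_leaf n E r w"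
    using leaf_below[OF v] by blast
  have w: "depth w = depth v + k" "(E ^^ k) v w" using descent[OF kw(1)] by auto
  have lower: "depth l - depth v \<le> tdist E v l'" if l': "is_leaf n E r l'" for l'
    using tdist_triangle[OF root_lt v leaf_lt[OF l']] depth_leaves_eq[OF l' l] by simp
  have "tdist E v w = depth l - depth v"
    using tdist_le[OF w(2)] lower[OF kw(2)] w(1) depth_leaves_eq[OF kw(2) l] by linarith
  then have "depth l - depth v \<in> (\<lambda>l'. tdist E v l') ` {l'. is_leaf n E r l'}"
    using kw(2) by (metis image_eqI mem_Collect_eq)
  moreover have "finite {l'. is_leaf n E r l'}"
    by (rule finite_subset[of _ "{..<n}"]) (auto dest: leaf_lt)
  ultimately show ?thesis unfolding height_def
    by (intro Min_eqI) (auto intro: lower simp: setcompr_eq_image)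
qed

lemma hedge_height_eq_depth_leaf: "is_leaf n E r l \<Longrightarrow> H = depth l"
  using height_eq_leaf_depth[OF root_lt] depth_root by (simp add: hedge_height_def)

lemma depth_le_hedge_height:
  assumes v: "v < n"
  shows "depth v \<le> H"
proof -
  obtain k w where "(child_rel ^^ k) v w" "is_leaf n E r w"
    using leaf_below[OF v] by blast
  then show ?thesis using descent hedge_height_eq_depth_leaf by fastforce
qed

lemma height_eq: "v < n \<Longrightarrow> height n E r v = H - depth v"
  using height_eq_leaf_depth leaf_below[OF root_lt] hedge_height_eq_depth_leaf by metis

lemma height_le: "v < n \<Longrightarrow> height n E r v \<le> H"
  using height_eq by simp

lemma height_leaf: "is_leaf n E r l \<Longrightarrow> height n E r l = 0"
  using height_eq leaf_lt hedge_height_eq_depth_leaf by simp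

lemma height_child: "y \<in> children n E r v \<Longrightarrow> height n E r y + 1 = height n E r v"
  using height_eq depth_child depth_le_hedge_height children_iff parent(1) by force

lemma children_nonempty_iff: "v < n \<Longrightarrow> children n E r v \<noteq> {} \<longleftrightarrow> \<not> is_leaf n E r v"
  using leaf_if_no_children height_child height_leaf by fastforce

abbreviation V :: "nat \<Rightarrow> nat set" where
  "V i \<equiv> Vset n E r i"

lemma finite_V: "finite (V i)"
  by (simp add: Vset_def)

lemma V_empty: "H < i \<Longrightarrow> V i = {}"
  using height_le by (fastforce simp: Vset_def)

lemma V_hedge_height: "V H = {r}"
proof -
  have "v = r" if "v < n" "H - depth v = H" for v
    using depth_le_hedge_height[OF that(1)] depth_eq_0 that hedge_height_ge_2 by fastforce
  then show ?thesis using root_lt depth_root height_eq by (auto simp: Vset_def)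
qed

lemma children_subset_V: "v \<in> V i \<Longrightarrow> children n E r v \<subseteq> V (i - 1)"
  using height_child children_iff by (fastforce simp: Vset_def)

text \<open>Children of distinct vertices are distinct, so lushness multiplies the level sizes.\<close>
lemma card_V_le:
  assumes "1 \<le> i"
  shows "(if 2 \<le> i then 3 else 2) * card (V i) \<le> card (V (i - 1))"
proof -
  define K :: nat where "K = (if 2 \<le> i then 3 else 2)"
  have K: "K \<le> card (children n E r v)" if "v \<in> V i" for v
    using lush that assms unfolding is_lush_def K_def by (auto simp: Vset_def)
  have disjoint: "children n E r v \<inter> children n E r w = {}" if "v \<noteq> w" for v w
    using that children_iff by auto
  have "card (V i) * K \<le> (\<Sum>v\<in>V i. card (children n E r v))"
    using sum_bounded_below[of "V i" K] K by simp
  also have "\<dots> = card (\<Union>v\<in>V i. children n E r v)"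
    using card_UN_disjoint[OF finite_V, where A = "children n E r"] finite_children disjoint by simp
  also have "\<dots> \<le> card (V (i - 1))"
    using children_subset_V by (intro card_mono finite_V) blast
  finally show ?thesis unfolding K_def by (simp add: mult.commute)
qed

lemma card_V_mono: "1 \<le> i \<Longrightarrow> card (V i) \<le> card (V (i - 1))"
  using card_V_le[of i] by (auto split: if_splits)

lemma V_nonempty: "i \<le> H \<Longrightarrow> V i \<noteq> {}"
proof (induction "H - i" arbitrary: i)
  case 0
  then show ?case using V_hedge_height by simp
next
  case (Suc j)
  then have "V (i + 1) \<noteq> {}" by simp
  then show ?case using card_V_mono[of "i + 1"] finite_V by fastforce
qed

lemma hedge_height_lt_n: "H < n"
proof -
  have "{..H} \<subseteq> (\<lambda>v. height n E r v) ` {..<n}"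
    using V_nonempty by (fastforce simp: Vset_def)
  then have "card {..H} \<le> card {..<n}"
    by (metis card_image_le card_mono finite_imageI finite_lessThan le_trans)
  then show ?thesis by simp
qed

lemma ell_nonneg: "1 \<le> i \<Longrightarrow> ell n E r i \<ge> 0"
  unfolding ell_def using card_V_mono[of i] by simp

lemma ell_eq_0: "H + 1 < i \<Longrightarrow> ell n E r i = 0"
  unfolding ell_def using V_empty[of i] V_empty[of "i - 1"] by simp

lemma card_V3_less_ell3: "int (card (V 3)) < ell n E r 3"
proof -
  have "card (V 2) > 0" using V_nonempty[of 2] hedge_height_ge_2 finite_V by (simp add: card_gt_0_iff)
  then show ?thesis using card_V_le[of 3] by (simp add: ell_def)
qed

end

section \<open>Factorising the characteristic matrix along the hedge\<close>

text \<open>If every nonzero off-diagonal entry \<open>B\<^sub>i\<^sub>j\<close> has \<open>g j < g i\<close>, only the identity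
  permutation contributes to the determinant: any other permutation would strictly
  decrease \<open>\<Sum>\<^sub>i g i\<close>.\<close>
lemma det_triangular_wrt_rank:
  fixes B :: "'a :: comm_ring_1 mat" and g :: "nat \<Rightarrow> nat"
  assumes B: "B \<in> carrier_mat n n"
    and triangular: "\<And>i j. i < n \<Longrightarrow> j < n \<Longrightarrow> i \<noteq> j \<Longrightarrow> B $$ (i, j) \<noteq> 0 \<Longrightarrow> g j < g i"
  shows "det B = (\<Prod>i = 0..<n. B $$ (i, i))"
proof -
  let ?S = "{p. p permutes {0..<n}}"
  let ?f = "\<lambda>p. signof p * (\<Prod>i = 0..<n. B $$ (i, p i))"
  have vanish: "?f p = 0" if p: "p permutes {0..<n}" "p \<noteq> id" for p
  proof (rule ccontr)
    assume f: "?f p \<noteq> 0"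
    have nz: "B $$ (i, p i) \<noteq> 0" if "i < n" for i
    proof
      assume "B $$ (i, p i) = 0"
      then have "(\<Prod>i = 0..<n. B $$ (i, p i)) = 0" using that by (intro prod_zero) auto
      with f show False by simp
    qed
    have p_lt: "p i < n" if "i < n" for i using permutes_in_image[OF p(1)] that by simp
    have le: "g (p i) \<le> g i" if "i \<in> {0..<n}" for i
      using triangular[of i "p i"] nz p_lt that by (cases "p i = i") auto
    obtain i where i: "p i \<noteq> i" using p(2) by (auto simp: fun_eq_iff)
    then have "i < n" using p(1) unfolding permutes_def by auto
    then have "\<exists>i\<in>{0..<n}. g (p i) < g i" using triangular[of i "p i"] nz p_lt i by auto
    then have "(\<Sum>i\<in>{0..<n}. g (p i)) < (\<Sum>i\<in>{0..<n}. g i)"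
      using le by (intro sum_strict_mono_ex1) auto
    moreover have "(\<Sum>i\<in>{0..<n}. g (p i)) = (\<Sum>i\<in>{0..<n}. g i)"
    proof -
      have "(\<Sum>i\<in>{0..<n}. g i) = (\<Sum>i\<in>p ` {0..<n}. g i)"
        using permutes_image[OF p(1)] by simp
      also have "\<dots> = (\<Sum>i\<in>{0..<n}. g (p i))"
        using sum.reindex[OF permutes_inj_on[OF p(1)], of g "{0..<n}"] by simp
      finally show ?thesis by simp
    qed
    ultimately show False by simp
  qed
  have "det B = sum ?f ?S" using det_def'[OF B] by simp
  also have "\<dots> = ?f id + sum ?f (?S - {id})"
    using sum.remove[of ?S id ?f] permutes_id finite_permutations by blast
  also have "sum ?f (?S - {id}) = 0" using vanish by (intro sum.neutral) auto
  finally show ?thesis by (simp add: sign_id)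
qed

locale hedge_matrix = lush_hedge +
  fixes A :: "real mat" and a b :: "nat \<Rightarrow> real"
  assumes carrier: "A \<in> carrier_mat n n"
    and zero_off_edges: "\<And>i j. i < n \<Longrightarrow> j < n \<Longrightarrow> i \<noteq> j \<Longrightarrow> \<not> E i j \<Longrightarrow> A $$ (i, j) = 0"
    and edge_products_pos: "\<And>i j. E i j \<Longrightarrow> A $$ (i, j) * A $$ (j, i) > 0"
    and diag: "\<And>v. v < n \<Longrightarrow> A $$ (v, v) = a (height n E r v + 1)"
    and children_sum: "\<And>v. v < n \<Longrightarrow> \<not> is_leaf n E r v \<Longrightarrow>
       (\<Sum>u\<in>children n E r v. A $$ (v, u) * A $$ (u, v)) = b (height n E r v + 1)"
begin

abbreviation Q :: "nat \<Rightarrow> real poly" where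
  "Q \<equiv> three_term_poly a b"

abbreviation ht :: "nat \<Rightarrow> nat" where
  "ht v \<equiv> height n E r v"

text \<open>\<open>xI - A = L U\<close> with \<open>L\<close> unitriangular with respect to height and \<open>U\<close> triangular
  with respect to depth. The diagonal of \<open>U\<close> holds the pivots of elimination from the
  leaves upwards; the three-term recurrence is exactly the Schur complement step.\<close>
context
  fixes x :: real
  assumes Q_nonzero_at: "\<And>i. i \<le> H + 1 \<Longrightarrow> poly (Q i) x \<noteq> 0"
begin

definition pivot :: "nat \<Rightarrow> real" where
  "pivot v = poly (Q (ht v + 1)) x / poly (Q (ht v)) x"

definition xI_minus_A :: "real mat" where
  "xI_minus_A = mat n n (\<lambda>(i, j). (if i = j then x else 0) - A $$ (i, j))"

definition lower_factor :: "real mat" where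
  "lower_factor = mat n n (\<lambda>(s, k).
     if s = k then 1 else if k \<in> children n E r s then xI_minus_A $$ (s, k) / pivot k else 0)"

definition upper_factor :: "real mat" where
  "upper_factor = mat n n (\<lambda>(k, t).
     if k = t then pivot k else if k \<noteq> r \<and> parent k = t then xI_minus_A $$ (k, t) else 0)"

lemma pivot_nonzero: "v < n \<Longrightarrow> pivot v \<noteq> 0"
  unfolding pivot_def using Q_nonzero_at height_le[of v] by simp

lemma pivot_child:
  assumes "k \<in> children n E r s"
  shows "pivot k = poly (Q (ht s)) x / poly (Q (ht s - 1)) x"
  using height_child[OF assms] unfolding pivot_def by (metis add_diff_cancel_right')

lemma xI_minus_A_entry: "i < n \<Longrightarrow> j < n \<Longrightarrow> xI_minus_A $$ (i, j) = (if i = j then x else 0) - A $$ (i, j)"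
  unfolding xI_minus_A_def by simp

lemma upper_factor_child_row:
  assumes "k \<in> children n E r s" "t < n"
  shows "upper_factor $$ (k, t) = (if k = t then pivot k else if s = t then xI_minus_A $$ (k, t) else 0)"
  using assms unfolding upper_factor_def children_iff by auto

lemma factor_product_entry:
  assumes s: "s < n" and t: "t < n"
  shows "(lower_factor * upper_factor) $$ (s, t)
           = upper_factor $$ (s, t)
             + (\<Sum>k\<in>children n E r s. xI_minus_A $$ (s, k) / pivot k * upper_factor $$ (k, t))"
proof -
  have sub: "insert s (children n E r s) \<subseteq> {0..<n}" using s child_lt by auto
  have "(lower_factor * upper_factor) $$ (s, t)
          = (\<Sum>k\<in>{0..<n}. lower_factor $$ (s, k) * upper_factor $$ (k, t))"
    using s t by (simp add: lower_factor_def upper_factor_def scalar_prod_def)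
  also have "\<dots> = (\<Sum>k\<in>insert s (children n E r s). lower_factor $$ (s, k) * upper_factor $$ (k, t))"
    by (rule sum.mono_neutral_right[OF _ sub]) (auto simp: lower_factor_def s)
  also have "\<dots> = lower_factor $$ (s, s) * upper_factor $$ (s, t)
      + (\<Sum>k\<in>children n E r s. lower_factor $$ (s, k) * upper_factor $$ (k, t))"
    using child_ne finite_children by (intro sum.insert) auto
  also have "(\<Sum>k\<in>children n E r s. lower_factor $$ (s, k) * upper_factor $$ (k, t))
      = (\<Sum>k\<in>children n E r s. xI_minus_A $$ (s, k) / pivot k * upper_factor $$ (k, t))"
    using s child_ne child_lt by (intro sum.cong) (auto simp: lower_factor_def)
  finally show ?thesis using s by (simp add: lower_factor_def)
qed

lemma factor_product_diag:
  assumes s: "s < n"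
  shows "(lower_factor * upper_factor) $$ (s, s) = xI_minus_A $$ (s, s)"
proof -
  let ?S = "\<Sum>k\<in>children n E r s. xI_minus_A $$ (s, k) / pivot k * upper_factor $$ (k, s)"
  have entry: "(lower_factor * upper_factor) $$ (s, s) = pivot s + ?S"
    using factor_product_entry[OF s s] s by (simp add: upper_factor_def)
  have target: "xI_minus_A $$ (s, s) = x - a (ht s + 1)"
    using s diag[OF s] by (simp add: xI_minus_A_entry)
  show ?thesis
  proof (cases "children n E r s = {}")
    case True
    then have "ht s = 0" using leaf_if_no_children[OF s] height_leaf by blast
    then show ?thesis using entry target True by (simp add: pivot_def)
  next
    case False
    then obtain k where k: "k \<in> children n E r s" by blast
    have not_leaf: "\<not> is_leaf n E r s" using children_nonempty_iff[OF s] False by blast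
    have h1: "ht s \<ge> 1" using height_child[OF k] by simp
    have "?S = (\<Sum>k\<in>children n E r s. A $$ (s, k) * A $$ (k, s))
        * (poly (Q (ht s - 1)) x / poly (Q (ht s)) x)"
      unfolding sum_distrib_right
      using s child_ne child_lt pivot_child upper_factor_child_row
      by (intro sum.cong) (auto simp: xI_minus_A_entry)
    also have "(\<Sum>k\<in>children n E r s. A $$ (s, k) * A $$ (k, s)) = b (ht s + 1)"
      using children_sum[OF s not_leaf] .
    finally have S: "?S = b (ht s + 1) * (poly (Q (ht s - 1)) x / poly (Q (ht s)) x)" .
    have "poly (Q (ht s)) x \<noteq> 0" using Q_nonzero_at height_le[OF s] by simp
    moreover have "poly (Q (ht s + 1)) x
        = (x - a (ht s + 1)) * poly (Q (ht s)) x - b (ht s + 1) * poly (Q (ht s - 1)) x"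
      using poly_three_term_poly_rec[of "ht s + 1" a b x] h1 by simp
    ultimately have "pivot s + ?S = x - a (ht s + 1)"
      unfolding S by (simp add: pivot_def field_simps)
    then show ?thesis using entry target by simp
  qed
qed

lemma factor_product_off_diag:
  assumes s: "s < n" and t: "t < n" and st: "s \<noteq> t"
  shows "(lower_factor * upper_factor) $$ (s, t) = xI_minus_A $$ (s, t)"
proof -
  have "(\<Sum>k\<in>children n E r s. xI_minus_A $$ (s, k) / pivot k * upper_factor $$ (k, t))
      = (\<Sum>k\<in>children n E r s. if k = t then xI_minus_A $$ (s, k) else 0)"
  proof (rule sum.cong)
    fix k assume k: "k \<in> children n E r s"
    show "xI_minus_A $$ (s, k) / pivot k * upper_factor $$ (k, t) = (if k = t then xI_minus_A $$ (s, k) else 0)"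
      using upper_factor_child_row[OF k t] st pivot_nonzero[OF child_lt[OF k]] by (cases "k = t") simp_all
  qed simp
  also have "\<dots> = (if t \<in> children n E r s then xI_minus_A $$ (s, t) else 0)"
    using finite_children by (simp add: sum.delta')
  finally have sum: "(\<Sum>k\<in>children n E r s. xI_minus_A $$ (s, k) / pivot k * upper_factor $$ (k, t))
      = (if t \<in> children n E r s then xI_minus_A $$ (s, t) else 0)" .
  consider (child) "t \<in> children n E r s" | (up) "s \<noteq> r" "parent s = t"
    | (other) "t \<notin> children n E r s" "\<not> (s \<noteq> r \<and> parent s = t)"
    by blast
  then show ?thesis
  proof cases
    case child
    then have "\<not> (s \<noteq> r \<and> parent s = t)" using depth_child parent(3)[OF s] by fastforce
    then have "upper_factor $$ (s, t) = 0" using s t st by (auto simp: upper_factor_def)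
    then show ?thesis using factor_product_entry[OF s t] sum child by simp
  next
    case up
    then have "t \<notin> children n E r s" using depth_child parent(3)[OF s] by fastforce
    then show ?thesis using factor_product_entry[OF s t] sum up st s t by (simp add: upper_factor_def)
  next
    case other
    have "\<not> E s t"
    proof
      assume "E s t"
      then have "s \<in> children n E r t" using edge_child_cases other(1) by blast
      then show False using other(2) by (simp add: children_iff)
    qed
    then have "xI_minus_A $$ (s, t) = 0" using zero_off_edges s t st by (simp add: xI_minus_A_entry)
    moreover have "upper_factor $$ (s, t) = 0" using other(2) s t st by (auto simp: upper_factor_def)
    ultimately show ?thesis using factor_product_entry[OF s t] sum other(1) by simp
  qed
qed

lemma xI_minus_A_factor: "xI_minus_A = lower_factor * upper_factor"
proof (rule eq_matI)
  fix i j assume "i < dim_row (lower_factor * upper_factor)" "j < dim_col (lower_factor * upper_factor)"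
  then have "i < n" "j < n" by (simp_all add: lower_factor_def upper_factor_def)
  then show "xI_minus_A $$ (i, j) = (lower_factor * upper_factor) $$ (i, j)"
    using factor_product_diag factor_product_off_diag by (cases "i = j") simp_all
qed (simp_all add: xI_minus_A_def lower_factor_def upper_factor_def)

lemma det_lower_factor: "det lower_factor = 1"
proof -
  have "det lower_factor = (\<Prod>i = 0..<n. lower_factor $$ (i, i))"
  proof (rule det_triangular_wrt_rank[where g = ht])
    fix i j assume "i < n" "j < n" "i \<noteq> j" "lower_factor $$ (i, j) \<noteq> 0"
    then have "j \<in> children n E r i" by (auto simp: lower_factor_def split: if_splits)
    then show "ht j < ht i" using height_child by fastforce
  qed (simp add: lower_factor_def)
  then show ?thesis by (simp add: lower_factor_def)
qed

lemma det_upper_factor: "det upper_factor = (\<Prod>v = 0..<n. pivot v)"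
proof -
  have "det upper_factor = (\<Prod>i = 0..<n. upper_factor $$ (i, i))"
  proof (rule det_triangular_wrt_rank[where g = depth])
    fix i j assume "i < n" "j < n" "i \<noteq> j" "upper_factor $$ (i, j) \<noteq> 0"
    then show "depth j < depth i" using parent(3)[of i] by (auto simp: upper_factor_def split: if_splits)
  qed (simp add: upper_factor_def)
  then show ?thesis by (simp add: upper_factor_def)
qed

lemma poly_char_poly_eq_prod_pivot: "poly (char_poly A) x = (\<Prod>v = 0..<n. pivot v)"
proof -
  have "poly (char_poly A) x = det (- char_matrix A x)" by (rule char_poly_matrix[OF carrier])
  also have "- char_matrix A x = xI_minus_A"
    using carrier by (intro eq_matI) (auto simp: xI_minus_A_def char_matrix_def)
  also have "det xI_minus_A = det lower_factor * det upper_factor"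
    unfolding xI_minus_A_factor
    by (rule det_mult[of _ n]) (auto simp: lower_factor_def upper_factor_def)
  finally show ?thesis by (simp add: det_lower_factor det_upper_factor)
qed

end

end

section \<open>Multiplicities of eigenvalues\<close>

lemma order_prod:
  fixes f :: "'a \<Rightarrow> 'b :: idom poly"
  assumes "finite S" and "\<And>i. i \<in> S \<Longrightarrow> f i \<noteq> 0"
  shows "order x (\<Prod>i\<in>S. f i) = (\<Sum>i\<in>S. order x (f i))"
  using assms
proof (induction S rule: finite_induct)
  case empty
  then show ?case by (simp add: order_1)
next
  case (insert j S)
  then have "f j * (\<Prod>i\<in>S. f i) \<noteq> 0" by simp
  then show ?case using insert by (simp add: order_mult)
qed

lemma poly_eq_if_eq_outside_finite:
  fixes p q :: "'a :: {idom, ring_char_0} poly"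
  assumes "finite Z" and "\<And>x. x \<notin> Z \<Longrightarrow> poly p x = poly q x"
  shows "p = q"
proof (rule ccontr)
  assume "p \<noteq> q"
  then have "finite {x. poly (p - q) x = 0}" by (intro poly_roots_finite) simp
  moreover have "UNIV \<subseteq> Z \<union> {x. poly (p - q) x = 0}" using assms(2) by auto
  ultimately have "finite (UNIV :: 'a set)" using assms(1) finite_subset by blast
  then show False using infinite_UNIV_char_0 by blast
qed

lemma sum_diff_mult_by_parts:
  fixes c w :: "nat \<Rightarrow> 'a :: comm_ring"
  shows "(\<Sum>i = 1..N. (c (i - 1) - c i) * w i)
           = (\<Sum>h<N. c h * (w (h + 1) - w h)) - c N * w N + c 0 * w 0"
proof (induction N)
  case (Suc N)
  have "{1..Suc N} = insert (Suc N) {1..N}" by auto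
  then show ?case using Suc by (simp add: algebra_simps)
qed simp

lemma sum_telescope_greaterThanAtMost:
  fixes c :: "nat \<Rightarrow> 'a :: ab_group_add"
  shows "m \<le> N \<Longrightarrow> (\<Sum>i\<in>{m<..N}. c (i - 1) - c i) = c m - c N"
proof (induction N rule: dec_induct)
  case (step N)
  then have "{m<..Suc N} = insert (Suc N) {m<..N}" by auto
  then show ?case using step by simp
qed simp

context hedge_matrix
begin

lemma b_pos:
  assumes "2 \<le> k" "k \<le> H + 1"
  shows "b k > 0"
proof -
  have "V (k - 1) \<noteq> {}" using V_nonempty assms by simp
  then obtain v where v: "v \<in> V (k - 1)" by blast
  then have vn: "v < n" and hv: "ht v = k - 1" by (auto simp: Vset_def)
  have not_leaf: "\<not> is_leaf n E r v" using height_leaf hv assms by auto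
  have "(\<Sum>u\<in>children n E r v. A $$ (v, u) * A $$ (u, v)) > 0"
  proof (rule sum_pos)
    show "children n E r v \<noteq> {}" using children_nonempty_iff[OF vn] not_leaf by blast
    show "A $$ (v, u) * A $$ (u, v) > 0" if "u \<in> children n E r v" for u
      using that edge_products_pos children_iff parent(2) by auto
  qed (rule finite_children)
  then show ?thesis using children_sum[OF vn not_leaf] hv assms by simp
qed

lemma Q_nonzero: "i \<le> H + 1 \<Longrightarrow> Q i \<noteq> 0"
  using three_term_poly_nonzero b_pos by simp

lemma order_Q_le_1: "1 \<le> i \<Longrightarrow> i \<le> H + 1 \<Longrightarrow> order x (Q i) \<le> 1"
  using order_three_term_poly_le_1 b_pos by simp

text \<open>Away from the finitely many roots of \<open>q\<^sub>0, \<dots>, q\<^sub>H\<^sub>+\<^sub>1\<close> this is the product of the pivots.\<close>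
lemma char_poly_mult_prod_Q:
  "char_poly A * (\<Prod>v = 0..<n. Q (ht v)) = (\<Prod>v = 0..<n. Q (ht v + 1))"
proof (rule poly_eq_if_eq_outside_finite)
  let ?Z = "\<Union>i\<le>H + 1. {x. poly (Q i) x = 0}"
  show "finite ?Z" using Q_nonzero poly_roots_finite by auto
  fix x assume "x \<notin> ?Z"
  then have nonzero: "\<And>i. i \<le> H + 1 \<Longrightarrow> poly (Q i) x \<noteq> 0" by auto
  have "poly (char_poly A) x = prod (pivot x) {0..<n}"
    by (rule poly_char_poly_eq_prod_pivot[OF nonzero])
  also have "\<dots> = (\<Prod>v = 0..<n. poly (Q (ht v + 1)) x / poly (Q (ht v)) x)"
    by (rule prod.cong) (simp_all add: pivot_def[OF nonzero])
  finally have "poly (char_poly A) x = (\<Prod>v = 0..<n. poly (Q (ht v + 1)) x / poly (Q (ht v)) x)" .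
  moreover have "(\<Prod>v = 0..<n. poly (Q (ht v)) x) \<noteq> 0"
    using nonzero height_le by (simp add: le_SucI)
  ultimately show "poly (char_poly A * (\<Prod>v = 0..<n. Q (ht v))) x = poly (\<Prod>v = 0..<n. Q (ht v + 1)) x"
    by (simp add: poly_prod prod_dividef)
qed

lemma mult_eq_sum_order:
  "int (mult x A) = (\<Sum>v = 0..<n. int (order x (Q (ht v + 1))) - int (order x (Q (ht v))))"
proof -
  have nz: "\<And>v. v \<in> {0..<n} \<Longrightarrow> Q (ht v) \<noteq> 0" "\<And>v. v \<in> {0..<n} \<Longrightarrow> Q (ht v + 1) \<noteq> 0"
    using Q_nonzero height_le by (simp_all add: le_SucI)
  then have "(\<Prod>v = 0..<n. Q (ht v + 1)) \<noteq> 0" by simp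
  then have "order x (char_poly A) + order x (\<Prod>v = 0..<n. Q (ht v))
      = order x (\<Prod>v = 0..<n. Q (ht v + 1))"
    unfolding char_poly_mult_prod_Q[symmetric] by (simp add: order_mult)
  moreover have "order x (\<Prod>v = 0..<n. Q (ht v)) = (\<Sum>v = 0..<n. order x (Q (ht v)))"
    "order x (\<Prod>v = 0..<n. Q (ht v + 1)) = (\<Sum>v = 0..<n. order x (Q (ht v + 1)))"
    using order_prod[of "{0..<n}" "\<lambda>v. Q (ht v)" x] order_prod[of "{0..<n}" "\<lambda>v. Q (ht v + 1)" x] nz
    by simp_all
  ultimately have "order x (char_poly A) + (\<Sum>v = 0..<n. order x (Q (ht v)))
      = (\<Sum>v = 0..<n. order x (Q (ht v + 1)))"
    by simp
  then show ?thesis unfolding mult_def by (simp add: sum_subtractf flip: of_nat_sum)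
qed

lemma sum_vertices_by_height:
  assumes "H < N"
  shows "(\<Sum>v = 0..<n. F (ht v)) = (\<Sum>i<N. of_nat (card (V i)) * F i)"
proof -
  have img: "ht ` {0..<n} \<subseteq> {..<N}" using height_le assms by fastforce
  have "(\<Sum>v = 0..<n. F (ht v)) = (\<Sum>i<N. \<Sum>v\<in>{v \<in> {0..<n}. ht v = i}. F (ht v))"
    using sum.group[OF _ _ img, of "\<lambda>v. F (ht v)"] by simp
  also have "\<dots> = (\<Sum>i<N. of_nat (card (V i)) * F i)"
    by (intro sum.cong) (auto simp: Vset_def)
  finally show ?thesis .
qed

lemma mult_eq_sum_ell:
  assumes "H < N"
  shows "int (mult x A) = (\<Sum>i = 1..N. ell n E r i * int (order x (Q i)))"
proof -
  have "int (mult x A) = (\<Sum>i<N. int (card (V i)) * (int (order x (Q (i + 1))) - int (order x (Q i))))"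
    unfolding mult_eq_sum_order by (rule sum_vertices_by_height[OF assms])
  moreover have "(\<Sum>i = 1..N. ell n E r i * int (order x (Q i)))
      = (\<Sum>i<N. int (card (V i)) * (int (order x (Q (i + 1))) - int (order x (Q i))))
        - int (card (V N)) * int (order x (Q N)) + int (card (V 0)) * int (order x (Q 0))"
    unfolding ell_def by (rule sum_diff_mult_by_parts)
  moreover have "card (V N) = 0" using V_empty assms by simp
  ultimately show ?thesis by (simp add: order_1)
qed

lemma ell_sum_le_mult:
  assumes "I \<subseteq> {1..n + 1}"
    and root: "\<And>i. i \<in> I \<Longrightarrow> i \<le> H + 1 \<Longrightarrow> poly (Q i) x = 0"
  shows "(\<Sum>i\<in>I. ell n E r i) \<le> int (mult x A)"
proof -
  have "(\<Sum>i\<in>I. ell n E r i) \<le> (\<Sum>i\<in>I. ell n E r i * int (order x (Q i)))"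
  proof (rule sum_mono)
    fix i assume i: "i \<in> I"
    show "ell n E r i \<le> ell n E r i * int (order x (Q i))"
    proof (cases "i \<le> H + 1")
      case True
      then have "order x (Q i) \<noteq> 0" using root[OF i True] Q_nonzero order_root by blast
      then show ?thesis using ell_nonneg[of i] i assms(1) by (auto simp: mult_le_cancel_left1)
    qed (simp add: ell_eq_0)
  qed
  also have "\<dots> \<le> (\<Sum>i = 1..n + 1. ell n E r i * int (order x (Q i)))"
    using assms(1) ell_nonneg by (intro sum_mono2) auto
  also have "\<dots> = int (mult x A)"
    using hedge_height_lt_n by (intro mult_eq_sum_ell[symmetric]) simp
  finally show ?thesis .
qed

lemma ell_residue_class_le_mult:
  assumes "1 \<le> j" and root: "\<And>k. poly (Q (j + m * k)) x = 0"
  shows "(\<Sum>i\<in>{i. j \<le> i \<and> i \<le> n + 1 \<and> i mod m = j mod m}. ell n E r i) \<le> int (mult x A)"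
proof (rule ell_sum_le_mult)
  fix i assume i: "i \<in> {i. j \<le> i \<and> i \<le> n + 1 \<and> i mod m = j mod m}"
  then have "m dvd i - j" using mod_eq_dvd_iff_nat by auto
  then obtain k where "i - j = m * k" by (elim dvdE)
  then have "i = j + m * k" using i by auto
  then show "poly (Q i) x = 0" using root by simp
qed (use assms(1) in auto)

text \<open>With \<open>q\<^sub>1, q\<^sub>2, q\<^sub>3\<close> nonzero at \<open>x\<close> and all roots simple, \<open>mult x A\<close> is at most
  \<open>\<Sum>\<^sub>i\<^sub>\<ge>\<^sub>4 \<ell>\<^sub>i = |V\<^sub>3|\<close>.\<close>
lemma mult_less_ell3:
  assumes "\<And>i. 1 \<le> i \<Longrightarrow> i \<le> 3 \<Longrightarrow> poly (Q i) x \<noteq> 0"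
  shows "int (mult x A) < ell n E r 3"
proof -
  define N where "N = H + 1"
  have no_root: "order x (Q i) = 0" if "1 \<le> i" "i \<le> 3" for i
    using assms[OF that] order_root by blast
  have N3: "3 \<le> N" using hedge_height_ge_2 by (simp add: N_def)
  have "int (mult x A) = (\<Sum>i = 1..N. ell n E r i * int (order x (Q i)))"
    by (rule mult_eq_sum_ell) (simp add: N_def)
  also have "\<dots> = (\<Sum>i\<in>{3<..N}. ell n E r i * int (order x (Q i)))"
    using no_root by (intro sum.mono_neutral_right) auto
  also have "\<dots> \<le> (\<Sum>i\<in>{3<..N}. ell n E r i)"
  proof (rule sum_mono)
    fix i assume "i \<in> {3<..N}"
    then have "ell n E r i \<ge> 0" "order x (Q i) \<le> 1"
      using ell_nonneg order_Q_le_1 by (auto simp: N_def)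
    then show "ell n E r i * int (order x (Q i)) \<le> ell n E r i" by (simp add: mult_left_le)
  qed
  also have "\<dots> = int (card (V 3)) - int (card (V N))"
    unfolding ell_def using sum_telescope_greaterThanAtMost[OF N3] by simp
  also have "\<dots> = int (card (V 3))" using V_empty by (simp add: N_def)
  finally show ?thesis using card_V3_less_ell3 by simp
qed

end

lemma PH_Cmat_hedge_matrix:
  assumes "lush_hedge n E r"
    and "A \<in> PH (Cmat a1 a2 b2 b3 b4 (hedge_height n E r + 1)) n E r"
  shows "hedge_matrix n E r A (Ca a1 a2 b2 b3 b4) (Cb a1 a2 b2 b3 b4)"
proof -
  interpret lush_hedge n E r by (fact assms(1))
  let ?c = "Cmat a1 a2 b2 b3 b4 (H + 1)"
  let ?v' = "\<lambda>v. H + 1 - height n E r v"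
  have A: "A \<in> matR n E" "\<And>v. v < n \<Longrightarrow> A $$ (v, v) = ?c (?v' v) (?v' v)"
    "\<And>v. v < n \<Longrightarrow> \<not> is_leaf n E r v \<Longrightarrow> (\<Sum>u\<in>children n E r v. A $$ (v, u) * A $$ (u, v))
       = ?c (?v' v) (?v' v + 1) * ?c (?v' v + 1) (?v' v)"
    using assms(2) unfolding PH_def Let_def by auto
  show ?thesis
  proof unfold_locales
    show "A \<in> carrier_mat n n" using A(1) by (simp add: matR_def)
    show "\<And>i j. i < n \<Longrightarrow> j < n \<Longrightarrow> i \<noteq> j \<Longrightarrow> \<not> E i j \<Longrightarrow> A $$ (i, j) = 0"
      using A(1) unfolding matR_def by blast
    show "\<And>i j. E i j \<Longrightarrow> A $$ (i, j) * A $$ (j, i) > 0"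
      using A(1) edge_lt by (simp add: matR_def)
    show "A $$ (v, v) = Ca a1 a2 b2 b3 b4 (height n E r v + 1)" if "v < n" for v
      using A(2)[OF that] height_le[OF that] by (auto simp: Cmat_def)
    show "(\<Sum>u\<in>children n E r v. A $$ (v, u) * A $$ (u, v)) = Cb a1 a2 b2 b3 b4 (height n E r v + 1)"
      if "v < n" "\<not> is_leaf n E r v" for v
    proof -
      have "children n E r v \<noteq> {}" using children_nonempty_iff that by blast
      then have "height n E r v \<ge> 1" using height_child by fastforce
      then show ?thesis using A(3)[OF that] height_le[OF that(1)] by (auto simp: Cmat_def)
    qed
  qed
qed

lemma inB_distinct: "inB a1 a2 b2 b3 b4 \<Longrightarrow> distinct [a1, a2, b2, b3, b4]"
  and inB_sum_ne: "inB a1 a2 b2 b3 b4 \<Longrightarrow> a2 + b2 \<noteq> b3 + b4"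
  unfolding inB_def by (auto; linarith)+

theorem mainTheorem7:
  fixes n :: nat and E :: "nat \<Rightarrow> nat \<Rightarrow> bool" and r :: nat
    and a1 a2 b2 b3 b4 :: real and A :: "real mat"
  assumes "is_lush n E r"
    and "hedge_height n E r \<ge> 2"
    and "inB a1 a2 b2 b3 b4"
    and "A \<in> PH (Cmat a1 a2 b2 b3 b4 (hedge_height n E r + 1)) n E r"
  shows "has_critical_mult_list n E r A \<and> witnesses_critical n E r A a1 a2 b2 b3 b4"
proof -
  have "is_rooted_tree n E r" using assms(1) by (simp add: is_lush_def is_hedge_def)
  then have hedge: "lush_hedge n E r" using assms(1,2) by unfold_locales
  interpret hedge_matrix n E r A "Ca a1 a2 b2 b3 b4" "Cb a1 a2 b2 b3 b4"
    using PH_Cmat_hedge_matrix[OF hedge assms(4)] .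
  interpret Lambda_params a1 a2 b2 b3 b4 .
  have distinct: "distinct [a1, a2, b2, b3, b4]" using inB_distinct[OF assms(3)] .
  then have beta: "poly (q (2 + 3 * k)) b2 = 0" "poly (q (3 + 3 * k)) b3 = 0"
    "poly (q (4 + 3 * k)) b4 = 0" for k
    using q_beta_roots[of k] by auto
  have "witnesses_critical n E r A a1 a2 b2 b3 b4"
    unfolding witnesses_critical_def
    using distinct
      ell_residue_class_le_mult[of 1 2 a1] ell_residue_class_le_mult[of 2 2 a2]
      ell_residue_class_le_mult[of 2 3 b2] ell_residue_class_le_mult[of 3 3 b3]
      ell_residue_class_le_mult[of 4 3 b4] q_alpha_roots beta
      mult_less_ell3[OF q_b4_nonroot[OF distinct inB_sum_ne[OF assms(3)]]]
    by simp
  then show ?thesis unfolding has_critical_mult_list_def by blast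
qed

end
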